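(* Let $E=\langle S_e,I_e,P_e,\tau,O_1,\dots,O_n,\pi_e\rangle$ be a finite interpreted environment for $n$ agents, let $\varphi$ be a formula over $Prop$, and let $\Phi$ be a set of formulas each of the form $K_i\chi$ (some $i$), closed under subformulae of this form; let $\Phi_i=\{K_i\chi\in\Phi\}$. Let $E'$, the propositions $\mathrm{said}_i(\cdot)$, $\mathrm{Say}(\Phi)$ and $\mathrm{Know}(\Phi,A)$ be as defined in the context. Then the following are equivalent: (1) there is a tuple $A=\langle A_1,\dots,A_n\rangle$ of protocol automata for $E$ such that $\mathcal I(P_A,E),(r,0)\models\varphi\wedge\mathrm{Know}(\Phi,A)$ for all runs $r$ of $\mathcal I(P_A,E)$; (2) $\varphi\wedge\mathrm{Say}(\Phi)$ is realized in $E'$ by the joint protocol $P_{A'}$ of some tuple $A'$ of protocol automata for $E'$. Moreover, the same equivalence holds when in both (1) and (2) the automata are required to have finite state sets.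
   Context: Framework. $n$ agents; finite action sets $ACT_e$, $ACT_i$; joint actions $ACT=ACT_e\times ACT_1\times\cdots\times ACT_n$; atomic propositions $Prop$. A finite interpreted environment $E=\langle S_e,I_e,P_e,\tau,O_1,\dots,O_n,\pi_e\rangle$: finite state set $S_e$, initial states $I_e\subseteq S_e$, $P_e:S_e\to\mathcal P(ACT_e)\setminus\{\emptyset\}$, $\tau(\mathbf a):S_e\to S_e$ for each joint action $\mathbf a$, observation functions $O_i:S_e\to\mathcal O$, $\pi_e:S_e\to\{0,1\}^{Prop}$. A run is an infinite sequence $r=s_0s_1\dots$ with $s_0\in I_e$ and each $s_{m+1}=\tau(\langle a_e,a_1,\dots,a_n\rangle)(s_m)$ for some joint action with $a_e\in P_e(s_m)$; $r(m)=s_m$; $r[k..m]=s_k\dots s_m$. Local state $r_i(m)=O_i(s_0)\cdots O_i(s_m)$; $(r,m)\sim_i(r',m')$ iff $r_i(m)=r'_i(m')$. A protocol for agent $i$ is $P_i:\mathcal O^+\to\mathcal P(ACT_i)\setminus\{\emptyset\}$; $\mathcal R(\mathbf P,E)$ is the set of runs with $r(m+1)=\tau(\mathbf a)(r(m))$ for some $\mathbf a\in P_e(r(m))\times P_1(r_1(m))\times\cdots\times P_n(r_n(m))$ for all $m$; $\mathcal I(\mathbf P,E)$ interprets $p$ at $(r,m)$ by $\pi_e(r(m))(p)$. Formulas are built from $Prop$ by $\neg,\wedge,\bigcirc$ (next), $U$ (until), $\exists$, $K_i$; abbreviations $\Diamond\varphi=\mathrm{true}\,U\,\varphi$, $\Box\varphi=\neg\Diamond\neg\varphi$.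 Semantics at $(r,m)$, $r\in\mathcal R$: linear temporal operators along $r$; $\exists\varphi$ iff some $r'\in\mathcal R$ with $r'[0..m]=r[0..m]$ satisfies $\varphi$ at $(r',m)$; $K_i\varphi$ iff $\varphi$ holds at all $(r',m')$, $r'\in\mathcal R$, $(r',m')\sim_i(r,m)$. $\mathbf P$ realizes $\psi$ in $E$ if $\psi$ holds at $(r,0)$ for all $r\in\mathcal R(\mathbf P,E)$. Protocol automata: $A_i=\langle Q_i,q_i,\mu_i,\alpha_i\rangle$ with state set $Q_i$, initial state $q_i$, transition function $\mu_i:Q_i\times\mathcal O\to Q_i$ and action function $\alpha_i:Q_i\to\mathcal P(ACT_i)\setminus\{\emptyset\}$; $A_i(\epsilon)=q_i$, $A_i(\sigma\cdot o)=\mu_i(A_i(\sigma),o)$; its protocol is $P_{A_i}(\sigma)=\alpha_i(A_i(\sigma))$, and $P_A=\langle P_{A_1},\dots,P_{A_n}\rangle$. Define $(r,m)\approx_i^A(r',m')$ iff $A_i(r_i(m))=A_i(r'_i(m'))$, and a modality $K_i^A$: $\mathcal I,(r,m)\models K_i^A\chi$ iff $\mathcal I,(r',m')\models\chi$ for all points $(r',m')$ of $\mathcal I$ with $(r',m')\approx_i^A(r,m)$. Modified environment $E'=\langle S'_e,I'_e,P'_e,\tau',O'_1,\dots,O'_n,\pi'_e\rangle$ with agent actions $ACT'_i=ACT_i\times\mathcal P(\Phi_i)$: $S'_e=S_e\times\mathcal P(\Phi_1)\times\cdots\times\mathcal P(\Phi_n)$; $I'_e=I_e\times\{\emptyset\}\times\cdots\times\{\emptyset\}$;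 $P'_e(s,\Psi_1,\dots,\Psi_n)=P_e(s)$; $\tau'(\langle a_e,(a_1,\Psi'_1),\dots,(a_n,\Psi'_n)\rangle)(s,\Psi_1,\dots,\Psi_n)=(\tau(\langle a_e,a_1,\dots,a_n\rangle)(s),\Psi'_1,\dots,\Psi'_n)$; $O'_i(s,\Psi_1,\dots,\Psi_n)=O_i(s)$; $\pi'_e((s,\Psi_1,\dots,\Psi_n))(p)=\pi_e(s)(p)$ for $p\in Prop$, and for each $\chi\in\Phi_i$ a new atomic proposition $\mathrm{said}_i(\chi)$ with $\pi'_e((s,\Psi_1,\dots,\Psi_n))(\mathrm{said}_i(\chi))=1$ iff $\chi\in\Psi_i$. $\mathrm{Say}(\Phi)=\bigwedge_{i=1}^n\bigwedge_{K_i\chi\in\Phi}\Box(K_i\chi\equiv\bigcirc\,\mathrm{said}_i(K_i\chi))$ and $\mathrm{Know}(\Phi,A)=\bigwedge_{i=1}^n\bigwedge_{K_i\chi\in\Phi}\Box(K_i\chi\equiv K_i^A\chi)$. *)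

theory Defs
  imports Main
begin

datatype ('p, 'ag) kfml =
    FAtom 'p
  | FNeg "('p, 'ag) kfml"
  | FAnd "('p, 'ag) kfml" "('p, 'ag) kfml"
  | FNext "('p, 'ag) kfml"
  | FUntil "('p, 'ag) kfml" "('p, 'ag) kfml"
  | FExists "('p, 'ag) kfml"
  | FK 'ag "('p, 'ag) kfml"

definition FOr :: "('p,'ag) kfml \<Rightarrow> ('p,'ag) kfml \<Rightarrow> ('p,'ag) kfml" where
  "FOr a b = FNeg (FAnd (FNeg a) (FNeg b))"

text \<open>true is the derived formula (not (a and not a)); we take a := the formula at hand.\<close>
definition FTrue_of :: "('p,'ag) kfml \<Rightarrow> ('p,'ag) kfml" where
  "FTrue_of a = FNeg (FAnd a (FNeg a))"

definition FDiamond :: "('p,'ag) kfml \<Rightarrow> ('p,'ag) kfml" where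
  "FDiamond a = FUntil (FTrue_of a) a"

definition FBox :: "('p,'ag) kfml \<Rightarrow> ('p,'ag) kfml" where
  "FBox a = FNeg (FDiamond (FNeg a))"

definition FIff :: "('p,'ag) kfml \<Rightarrow> ('p,'ag) kfml \<Rightarrow> ('p,'ag) kfml" where
  "FIff a b = FAnd (FNeg (FAnd a (FNeg b))) (FNeg (FAnd b (FNeg a)))"

primrec subfmls :: "('p,'ag) kfml \<Rightarrow> ('p,'ag) kfml set" where
  "subfmls (FAtom p) = {FAtom p}"
| "subfmls (FNeg a) = insert (FNeg a) (subfmls a)"
| "subfmls (FAnd a b) = insert (FAnd a b) (subfmls a \<union> subfmls b)"
| "subfmls (FNext a) = insert (FNext a) (subfmls a)"
| "subfmls (FUntil a b) = insert (FUntil a b) (subfmls a \<union> subfmls b)"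
| "subfmls (FExists a) = insert (FExists a) (subfmls a)"
| "subfmls (FK i a) = insert (FK i a) (subfmls a)"

record ('s, 'ae, 'a, 'ag, 'o, 'p) env =
  St   :: "'s set"
  Init :: "'s set"
  ActE :: "'ae set"
  Act  :: "'ag \<Rightarrow> 'a set"
  Pe   :: "'s \<Rightarrow> 'ae set"
  Tr   :: "'ae \<Rightarrow> ('ag \<Rightarrow> 'a) \<Rightarrow> 's \<Rightarrow> 's"
  Obs  :: "'ag \<Rightarrow> 's \<Rightarrow> 'o"
  Lab  :: "'s \<Rightarrow> 'p \<Rightarrow> bool"

definition finite_env :: "('s, 'ae, 'a, 'ag, 'o, 'p) env \<Rightarrow> bool" where
  "finite_env E \<longleftrightarrow>
     finite (St E) \<and> finite (ActE E) \<and> (\<forall>i. finite (Act E i)) \<and>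
     Init E \<subseteq> St E \<and>
     (\<forall>s\<in>St E. Pe E s \<noteq> {} \<and> Pe E s \<subseteq> ActE E) \<and>
     (\<forall>s\<in>St E. \<forall>ae\<in>ActE E. \<forall>a. (\<forall>i. a i \<in> Act E i) \<longrightarrow> Tr E ae a s \<in> St E)"

definition loc :: "('s, 'ae, 'a, 'ag, 'o, 'p) env \<Rightarrow> 'ag \<Rightarrow> (nat \<Rightarrow> 's) \<Rightarrow> nat \<Rightarrow> 'o list" where
  "loc E i r m = map (\<lambda>k. Obs E i (r k)) [0..<Suc m]"

definition runs :: "('s, 'ae, 'a, 'ag, 'o, 'p) env \<Rightarrow> ('ag \<Rightarrow> 'o list \<Rightarrow> 'a set) \<Rightarrow> (nat \<Rightarrow> 's) set" where
  "runs E P = {r. r 0 \<in> Init E \<and>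
     (\<forall>m. \<exists>ae\<in>Pe E (r m). \<exists>a. (\<forall>i. a i \<in> P i (loc E i r m)) \<and> r (Suc m) = Tr E ae a (r m))}"

primrec sat :: "('s, 'ae, 'a, 'ag, 'o, 'p) env \<Rightarrow> (nat \<Rightarrow> 's) set \<Rightarrow> (nat \<Rightarrow> 's) \<Rightarrow> nat
                 \<Rightarrow> ('p, 'ag) kfml \<Rightarrow> bool" where
  "sat E R r m (FAtom p) = Lab E (r m) p"
| "sat E R r m (FNeg a) = (\<not> sat E R r m a)"
| "sat E R r m (FAnd a b) = (sat E R r m a \<and> sat E R r m b)"
| "sat E R r m (FNext a) = sat E R r (Suc m) a"
| "sat E R r m (FUntil a b) = (\<exists>k\<ge>m. sat E R r k b \<and> (\<forall>j. m \<le> j \<and> j < k \<longrightarrow> sat E R r j a))"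
| "sat E R r m (FExists a) = (\<exists>r'\<in>R. (\<forall>j\<le>m. r' j = r j) \<and> sat E R r' m a)"
| "sat E R r m (FK i a) = (\<forall>r'\<in>R. \<forall>m'. loc E i r' m' = loc E i r m \<longrightarrow> sat E R r' m' a)"

definition realizes :: "('s, 'ae, 'a, 'ag, 'o, 'p) env \<Rightarrow> ('ag \<Rightarrow> 'o list \<Rightarrow> 'a set) \<Rightarrow> ('p,'ag) kfml \<Rightarrow> bool" where
  "realizes E P \<psi> \<longleftrightarrow> (\<forall>r\<in>runs E P. sat E (runs E P) r 0 \<psi>)"

record ('q, 'o, 'a, 'ag) pautos =
  Qs    :: "'ag \<Rightarrow> 'q set"
  q0    :: "'ag \<Rightarrow> 'q"
  mu    :: "'ag \<Rightarrow> 'q \<Rightarrow> 'o \<Rightarrow> 'q"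
  alpha :: "'ag \<Rightarrow> 'q \<Rightarrow> 'a set"

definition is_pautos :: "('s, 'ae, 'a, 'ag, 'o, 'p) env \<Rightarrow> ('q, 'o, 'a, 'ag) pautos \<Rightarrow> bool" where
  "is_pautos E A \<longleftrightarrow> (\<forall>i. q0 A i \<in> Qs A i \<and>
     (\<forall>q\<in>Qs A i. \<forall>ob. mu A i q ob \<in> Qs A i) \<and>
     (\<forall>q\<in>Qs A i. alpha A i q \<noteq> {} \<and> alpha A i q \<subseteq> Act E i))"

definition finite_pautos :: "('q, 'o, 'a, 'ag) pautos \<Rightarrow> bool" where
  "finite_pautos A \<longleftrightarrow> (\<forall>i. finite (Qs A i))"

definition astate :: "('q, 'o, 'a, 'ag) pautos \<Rightarrow> 'ag \<Rightarrow> 'o list \<Rightarrow> 'q" where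
  "astate A i \<sigma> = foldl (mu A i) (q0 A i) \<sigma>"

definition pa_proto :: "('q, 'o, 'a, 'ag) pautos \<Rightarrow> 'ag \<Rightarrow> 'o list \<Rightarrow> 'a set" where
  "pa_proto A i \<sigma> = alpha A i (astate A i \<sigma>)"

definition satKA :: "('s, 'ae, 'a, 'ag, 'o, 'p) env \<Rightarrow> ('q, 'o, 'a, 'ag) pautos \<Rightarrow> 'ag
                      \<Rightarrow> (nat \<Rightarrow> 's) \<Rightarrow> nat \<Rightarrow> ('p, 'ag) kfml \<Rightarrow> bool" where
  "satKA E A i r m \<chi> \<longleftrightarrow>
     (\<forall>r'\<in>runs E (pa_proto A). \<forall>m'.
        astate A i (loc E i r' m') = astate A i (loc E i r m) \<longrightarrow> sat E (runs E (pa_proto A)) r' m' \<chi>)"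

text \<open>I(P_A,E),(r,0) |= Know(Phi,A), i.e. the conjunction over all K_i chi in Phi of
  Box (K_i chi == K_i^A chi), unfolded semantically.\<close>
definition know_holds :: "('s, 'ae, 'a, 'ag, 'o, 'p) env \<Rightarrow> ('p,'ag) kfml set \<Rightarrow> ('q, 'o, 'a, 'ag) pautos
                          \<Rightarrow> (nat \<Rightarrow> 's) \<Rightarrow> bool" where
  "know_holds E \<Phi> A r \<longleftrightarrow>
     (\<forall>i \<chi>. FK i \<chi> \<in> \<Phi> \<longrightarrow> (\<forall>m.
        sat E (runs E (pa_proto A)) r m (FK i \<chi>) \<longleftrightarrow> satKA E A i r m \<chi>))"

datatype ('p, 'ag) prop' = Orig 'p | Said 'ag "('p, 'ag) kfml"

definition Phi_i :: "('p,'ag) kfml set \<Rightarrow> 'ag \<Rightarrow> ('p,'ag) kfml set" where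
  "Phi_i \<Phi> i = {f \<in> \<Phi>. \<exists>\<chi>. f = FK i \<chi>}"

definition lift :: "('p,'ag) kfml \<Rightarrow> (('p,'ag) prop', 'ag) kfml" where
  "lift \<phi> = map_kfml Orig id \<phi>"

definition Emod :: "('s, 'ae, 'a, 'ag, 'o, 'p) env \<Rightarrow> ('p,'ag) kfml set
   \<Rightarrow> ('s \<times> ('ag \<Rightarrow> ('p,'ag) kfml set), 'ae, 'a \<times> ('p,'ag) kfml set, 'ag, 'o, ('p,'ag) prop') env" where
  "Emod E \<Phi> = \<lparr>
     St = St E \<times> {\<Psi>. \<forall>i. \<Psi> i \<subseteq> Phi_i \<Phi> i},
     Init = Init E \<times> {\<lambda>i. {}},
     ActE = ActE E,
     Act = (\<lambda>i. Act E i \<times> Pow (Phi_i \<Phi> i)),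
     Pe = (\<lambda>(s, \<Psi>). Pe E s),
     Tr = (\<lambda>ae a (s, \<Psi>). (Tr E ae (\<lambda>i. fst (a i)) s, \<lambda>i. snd (a i))),
     Obs = (\<lambda>i (s, \<Psi>). Obs E i s),
     Lab = (\<lambda>(s, \<Psi>) p. case p of Orig q \<Rightarrow> Lab E s q | Said i \<chi> \<Rightarrow> \<chi> \<in> \<Psi> i) \<rparr>"

definition Say_conjuncts :: "('p,'ag) kfml set \<Rightarrow> (('p,'ag) prop', 'ag) kfml set" where
  "Say_conjuncts \<Phi> = {FBox (FIff (lift (FK i \<chi>)) (FNext (FAtom (Said i (FK i \<chi>))))) | i \<chi>. FK i \<chi> \<in> \<Phi>}"

text \<open>phi /\ Say(Phi) is realized: a conjunction holds iff every conjunct holds.\<close>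
definition realizes_phi_Say :: "('s, 'ae, 'a, 'ag, 'o, 'p) env \<Rightarrow> ('p,'ag) kfml set \<Rightarrow> ('p,'ag) kfml
   \<Rightarrow> ('ag \<Rightarrow> 'o list \<Rightarrow> ('a \<times> ('p,'ag) kfml set) set) \<Rightarrow> bool" where
  "realizes_phi_Say E \<Phi> \<phi> P \<longleftrightarrow>
     realizes (Emod E \<Phi>) P (lift \<phi>) \<and> (\<forall>\<psi>\<in>Say_conjuncts \<Phi>. realizes (Emod E \<Phi>) P \<psi>)"

definition knowledge_set :: "('p,'ag) kfml set \<Rightarrow> bool" where
  "knowledge_set \<Phi> \<longleftrightarrow>
     (\<forall>f\<in>\<Phi>. \<exists>i \<chi>. f = FK i \<chi>) \<and>
     (\<forall>f\<in>\<Phi>. \<forall>g\<in>subfmls f. (\<exists>j \<psi>. g = FK j \<psi>) \<longrightarrow> g \<in> \<Phi>)"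

end

theory Submission
  imports Defs
begin

text \<open>(1) \<open>\<Rightarrow>\<close> (2): let agent \<open>i\<close>'s automaton, in state \<open>q\<close>, additionally announce the set of
  all \<open>K\<^sub>i \<chi> \<in> \<Phi>\<close> such that \<open>\<chi>\<close> holds wherever \<open>A\<^sub>i\<close> is in state \<open>q\<close>. Announcements do not
  influence transitions, so the runs of \<open>E'\<close> project onto the runs of \<open>E\<close> and formulas over
  \<open>Prop\<close> keep their truth values; \<open>Know(\<Phi>, A)\<close> then says precisely that the announcements
  satisfy \<open>Say(\<Phi>)\<close>.

  (2) \<open>\<Rightarrow>\<close> (1): forget the announcements. If \<open>K\<^sub>i \<chi>\<close> holds at a point, agent \<open>i\<close> announces it
  there. The announcement is an action offered by the automaton state alone, so agent \<open>i\<close> can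
  make it at every point with the same automaton state, where \<open>Say(\<Phi>)\<close> makes it truthful;
  hence \<open>K\<^sub>i \<chi>\<close> implies \<open>K\<^sub>i\<^sup>A \<chi>\<close>, and the converse is trivial.

  Both constructions keep the state sets, which gives the statement for finite automata.\<close>

section \<open>Runs\<close>

lemma prefix_extends_to_sequence:
  fixes Q :: "(nat \<Rightarrow> 's) \<Rightarrow> nat \<Rightarrow> bool"
  assumes local: "\<And>g h k. (\<And>j. j \<le> Suc k \<Longrightarrow> g j = h j) \<Longrightarrow> Q g k = Q h k"
    and extensible: "\<And>g k. I (g 0) \<Longrightarrow> \<forall>j<k. Q g j \<Longrightarrow> \<exists>s. Q (g(Suc k := s)) k"
    and start: "I (f 0)" and prefix: "\<forall>k<m. Q f k"
  shows "\<exists>r. (\<forall>k. Q r k) \<and> (\<forall>j\<le>m. r j = f j)"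
proof -
  define next_val where "next_val g k = (SOME s. Q (g(Suc k := s)) k)" for g k
  \<comment> \<open>\<open>G n\<close> is valid below \<open>m + n\<close>; the limit is read off the diagonal.\<close>
  define G where "G = rec_nat f (\<lambda>n g. g(Suc (m + n) := next_val g (m + n)))"
  have G_0: "G 0 = f" and G_Suc: "G (Suc n) = (G n)(Suc (m + n) := next_val (G n) (m + n))" for n
    by (simp_all add: G_def)
  have G_stable: "G (n + d) j = G n j" if "j \<le> m + n" for n d j
    using that by (induction d) (simp_all add: G_Suc)
  have G_agree: "G n j = G n' j" if "j \<le> m + n" "j \<le> m + n'" for n n' j
    using G_stable[of j n "n' - n"] G_stable[of j n' "n - n'"] that
    by (cases "n \<le> n'") simp_all
  have G_valid: "G n 0 = f 0 \<and> (\<forall>k<m + n. Q (G n) k)" for n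
  proof (induction n)
    case 0
    then show ?case using prefix by (simp add: G_0)
  next
    case (Suc n)
    then have init: "I (G n 0)" and steps: "\<forall>k<m + n. Q (G n) k"
      using start by simp_all
    have new: "Q (G (Suc n)) (m + n)"
      unfolding G_Suc next_val_def by (rule someI_ex) (rule extensible[OF init steps])
    have "Q (G (Suc n)) k = Q (G n) k" if "k < m + n" for k
      by (rule local) (use that in \<open>simp add: G_Suc\<close>)
    with steps have old: "Q (G (Suc n)) k" if "k < m + n" for k
      using that by simp
    have "\<forall>k<m + Suc n. Q (G (Suc n)) k"
      using new old by (auto simp: less_Suc_eq)
    moreover have "G (Suc n) 0 = f 0"
      using Suc.IH by (simp add: G_Suc)
    ultimately show ?case by blast
  qed
  define r where "r k = G k k" for k
  have r_G: "r j = G n j" if "j \<le> m + n" for j n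
    unfolding r_def by (rule G_agree) (use that in simp_all)
  have "Q r k = Q (G (Suc k)) k" for k
    by (rule local) (simp add: r_G)
  then have "Q r k" for k
    using G_valid[of "Suc k"] by simp
  moreover have "r j = f j" if "j \<le> m" for j
    using r_G[of j 0] that by (simp add: G_0)
  ultimately show ?thesis by blast
qed

definition run_step ::
    "('s, 'ae, 'a, 'ag, 'o, 'p) env \<Rightarrow> ('ag \<Rightarrow> 'o list \<Rightarrow> 'a set) \<Rightarrow> (nat \<Rightarrow> 's) \<Rightarrow> nat \<Rightarrow> bool" where
  "run_step F P r k \<longleftrightarrow>
     (\<exists>ae\<in>Pe F (r k). \<exists>a. (\<forall>i. a i \<in> P i (loc F i r k)) \<and> r (Suc k) = Tr F ae a (r k))"

lemma runs_iff_run_step: "r \<in> runs F P \<longleftrightarrow> r 0 \<in> Init F \<and> (\<forall>k. run_step F P r k)"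
  by (simp add: runs_def run_step_def)

lemma loc_cong: "(\<And>j. j \<le> k \<Longrightarrow> g j = h j) \<Longrightarrow> loc F i g k = loc F i h k"
  unfolding loc_def by (intro map_cong) auto

lemma run_step_cong:
  assumes "\<And>j. j \<le> Suc k \<Longrightarrow> g j = h j"
  shows "run_step F P g k = run_step F P h k"
proof -
  have "loc F i g k = loc F i h k" for i by (rule loc_cong) (simp add: assms)
  then show ?thesis unfolding run_step_def by (simp add: assms)
qed

definition closed_env :: "('s, 'ae, 'a, 'ag, 'o, 'p) env \<Rightarrow> bool" where
  "closed_env F \<longleftrightarrow> Init F \<subseteq> St F \<and>
     (\<forall>s\<in>St F. Pe F s \<noteq> {} \<and> Pe F s \<subseteq> ActE F) \<and>
     (\<forall>s\<in>St F. \<forall>ae\<in>ActE F. \<forall>a. (\<forall>i. a i \<in> Act F i) \<longrightarrow> Tr F ae a s \<in> St F)"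

definition proper_protocol ::
    "('s, 'ae, 'a, 'ag, 'o, 'p) env \<Rightarrow> ('ag \<Rightarrow> 'o list \<Rightarrow> 'a set) \<Rightarrow> bool" where
  "proper_protocol F P \<longleftrightarrow> (\<forall>i \<sigma>. P i \<sigma> \<noteq> {} \<and> P i \<sigma> \<subseteq> Act F i)"

lemma finite_env_closed: "finite_env E \<Longrightarrow> closed_env E"
  by (simp add: finite_env_def closed_env_def)

lemma run_step_in_St:
  assumes "closed_env F" "proper_protocol F P" "r k \<in> St F" "run_step F P r k"
  shows "r (Suc k) \<in> St F"
proof -
  obtain ae a where "ae \<in> Pe F (r k)" "\<forall>i. a i \<in> P i (loc F i r k)"
    and next_state: "r (Suc k) = Tr F ae a (r k)"
    using assms(4) unfolding run_step_def by blast
  with assms(1-3) have "ae \<in> ActE F" "\<forall>i. a i \<in> Act F i"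
    unfolding closed_env_def proper_protocol_def by blast+
  with assms(1,3) show ?thesis
    unfolding next_state closed_env_def by blast
qed

lemma run_prefix_in_St:
  assumes "closed_env F" "proper_protocol F P" "g 0 \<in> Init F" "\<forall>j<k. run_step F P g j"
  shows "g k \<in> St F"
  using assms(4)
proof (induction k)
  case 0
  then show ?case using assms(1,3) by (auto simp: closed_env_def)
next
  case (Suc k)
  then show ?case using run_step_in_St[OF assms(1,2)] by simp
qed

lemma run_step_extensible:
  assumes "closed_env F" "proper_protocol F P" "g k \<in> St F"
  shows "\<exists>s. run_step F P (g(Suc k := s)) k"
proof -
  obtain ae where ae: "ae \<in> Pe F (g k)"
    using assms(1,3) unfolding closed_env_def by blast
  have "\<forall>i. \<exists>x. x \<in> P i (loc F i g k)"
    using assms(2) unfolding proper_protocol_def by blast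
  then obtain a where a: "\<forall>i. a i \<in> P i (loc F i g k)" by metis
  have "loc F i (g(Suc k := s)) k = loc F i g k" for i s by (rule loc_cong) simp
  then have "run_step F P (g(Suc k := Tr F ae a (g k))) k"
    unfolding run_step_def using ae a by auto
  then show ?thesis ..
qed

lemma runs_extend_prefix:
  assumes "closed_env F" "proper_protocol F P" "f 0 \<in> Init F" "\<forall>k<m. run_step F P f k"
  shows "\<exists>r\<in>runs F P. \<forall>j\<le>m. r j = f j"
proof -
  have "\<exists>r. (\<forall>k. run_step F P r k) \<and> (\<forall>j\<le>m. r j = f j)"
  proof (rule prefix_extends_to_sequence[where I = "\<lambda>s. s \<in> Init F"])
    show "run_step F P g k = run_step F P h k" if "\<And>j. j \<le> Suc k \<Longrightarrow> g j = h j" for g h k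
      using that by (rule run_step_cong)
    show "\<exists>s. run_step F P (g(Suc k := s)) k" if "g 0 \<in> Init F" "\<forall>j<k. run_step F P g j" for g k
      using assms(1,2) run_prefix_in_St[OF assms(1,2) that] by (rule run_step_extensible)
  qed (use assms(3,4) in simp_all)
  then obtain r where steps: "\<forall>k. run_step F P r k" and prefix: "\<forall>j\<le>m. r j = f j"
    by blast
  have "r \<in> runs F P"
    unfolding runs_iff_run_step using steps prefix assms(3) by simp
  with prefix show ?thesis by blast
qed

lemma astate_in_Qs:
  assumes "is_pautos F A"
  shows "astate A i \<sigma> \<in> Qs A i"
proof -
  have "foldl (mu A i) q \<sigma> \<in> Qs A i" if "q \<in> Qs A i" for q
    using that assms by (induction \<sigma> arbitrary: q) (auto simp: is_pautos_def)
  then show ?thesis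
    using assms by (simp add: astate_def is_pautos_def)
qed

lemma proper_protocol_pa_proto:
  assumes "is_pautos F A"
  shows "proper_protocol F (pa_proto A)"
  unfolding proper_protocol_def pa_proto_def
proof (intro allI)
  fix i \<sigma>
  from assms have "\<forall>q\<in>Qs A i. alpha A i q \<noteq> {} \<and> alpha A i q \<subseteq> Act F i"
    by (simp add: is_pautos_def)
  with astate_in_Qs[OF assms]
  show "alpha A i (astate A i \<sigma>) \<noteq> {} \<and> alpha A i (astate A i \<sigma>) \<subseteq> Act F i"
    by blast
qed

section \<open>The environment with announcements\<close>

lemma Emod_simps [simp]:
  "St (Emod E \<Phi>) = St E \<times> {\<Psi>. \<forall>i. \<Psi> i \<subseteq> Phi_i \<Phi> i}"
  "Init (Emod E \<Phi>) = Init E \<times> {\<lambda>i. {}}"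
  "ActE (Emod E \<Phi>) = ActE E"
  "Act (Emod E \<Phi>) i = Act E i \<times> Pow (Phi_i \<Phi> i)"
  "Pe (Emod E \<Phi>) x = Pe E (fst x)"
  "Tr (Emod E \<Phi>) ae b x = (Tr E ae (\<lambda>i. fst (b i)) (fst x), \<lambda>i. snd (b i))"
  "Obs (Emod E \<Phi>) i x = Obs E i (fst x)"
  "Lab (Emod E \<Phi>) x (Orig p) = Lab E (fst x) p"
  "Lab (Emod E \<Phi>) x (Said i f) = (f \<in> snd x i)"
  by (simp_all add: Emod_def split_beta)

lemma loc_Emod [simp]: "loc (Emod E \<Phi>) i r k = loc E i (fst \<circ> r) k"
  by (simp add: loc_def)

lemma closed_env_Emod:
  assumes "closed_env E"
  shows "closed_env (Emod E \<Phi>)"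
proof -
  from assms have init: "Init E \<subseteq> St E"
    and pe: "\<And>s. s \<in> St E \<Longrightarrow> Pe E s \<noteq> {} \<and> Pe E s \<subseteq> ActE E"
    and tr: "\<And>s ae a. s \<in> St E \<Longrightarrow> ae \<in> ActE E \<Longrightarrow> \<forall>i. a i \<in> Act E i \<Longrightarrow> Tr E ae a s \<in> St E"
    unfolding closed_env_def by blast+
  have "Tr (Emod E \<Phi>) ae b x \<in> St (Emod E \<Phi>)"
    if "x \<in> St (Emod E \<Phi>)" "ae \<in> ActE (Emod E \<Phi>)" "\<forall>i. b i \<in> Act (Emod E \<Phi>) i" for x ae b
  proof -
    from that have "fst x \<in> St E" "ae \<in> ActE E" "\<forall>i. fst (b i) \<in> Act E i"
      and "\<forall>i. snd (b i) \<subseteq> Phi_i \<Phi> i"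
      by (auto simp: mem_Times_iff)
    then show ?thesis by (simp add: tr)
  qed
  moreover have "Init (Emod E \<Phi>) \<subseteq> St (Emod E \<Phi>)"
    using init by auto
  moreover have "Pe (Emod E \<Phi>) x \<noteq> {} \<and> Pe (Emod E \<Phi>) x \<subseteq> ActE (Emod E \<Phi>)"
    if "x \<in> St (Emod E \<Phi>)" for x
    using that pe[of "fst x"] by (simp add: mem_Times_iff)
  ultimately show ?thesis
    unfolding closed_env_def by blast
qed

definition fst_proto :: "('ag \<Rightarrow> 'o list \<Rightarrow> ('a \<times> 'b) set) \<Rightarrow> 'ag \<Rightarrow> 'o list \<Rightarrow> 'a set" where
  "fst_proto P i \<sigma> = fst ` P i \<sigma>"

lemma run_step_Emod:
  "run_step (Emod E \<Phi>) P r k \<longleftrightarrow>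
     (\<exists>ae\<in>Pe E (fst (r k)). \<exists>b. (\<forall>i. b i \<in> P i (loc E i (fst \<circ> r) k)) \<and>
        r (Suc k) = (Tr E ae (\<lambda>i. fst (b i)) (fst (r k)), \<lambda>i. snd (b i)))"
  by (simp add: run_step_def)

lemma runs_Emod_fst:
  assumes "r \<in> runs (Emod E \<Phi>) P"
  shows "fst \<circ> r \<in> runs E (fst_proto P)"
  unfolding runs_iff_run_step
proof (intro conjI allI)
  show "(fst \<circ> r) 0 \<in> Init E"
    using assms by (auto simp: runs_iff_run_step)
  fix k
  obtain ae b where "ae \<in> Pe E (fst (r k))" "\<forall>i. b i \<in> P i (loc E i (fst \<circ> r) k)"
    and "r (Suc k) = (Tr E ae (\<lambda>i. fst (b i)) (fst (r k)), \<lambda>i. snd (b i))"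
    using assms unfolding runs_iff_run_step run_step_Emod by blast
  then show "run_step E (fst_proto P) (fst \<circ> r) k"
    unfolding run_step_def fst_proto_def by force
qed

lemma runs_Emod_splice:
  assumes f0: "f 0 \<in> Init (Emod E \<Phi>)"
    and f_steps: "\<forall>k<m. run_step (Emod E \<Phi>) P f k"
    and r: "r \<in> runs E (fst_proto P)"
    and agree: "\<forall>j\<le>m. r j = fst (f j)"
  shows "\<exists>r'\<in>runs (Emod E \<Phi>) P. (\<forall>j\<le>m. r' j = f j) \<and> fst \<circ> r' = r"
proof -
  have "\<forall>k. \<exists>ae b. ae \<in> Pe E (r k) \<and> (\<forall>i. b i \<in> P i (loc E i r k)) \<and>
                   r (Suc k) = Tr E ae (\<lambda>i. fst (b i)) (r k)"
  proof
    fix k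
    obtain ae a where ae: "ae \<in> Pe E (r k)" and a: "\<forall>i. a i \<in> fst ` P i (loc E i r k)"
      and next_state: "r (Suc k) = Tr E ae a (r k)"
      using r unfolding runs_iff_run_step run_step_def fst_proto_def by blast
    from a have "\<forall>i. \<exists>x. x \<in> P i (loc E i r k) \<and> fst x = a i"
      by force
    then obtain b where b: "\<forall>i. b i \<in> P i (loc E i r k) \<and> fst (b i) = a i"
      by metis
    then have "(\<lambda>i. fst (b i)) = a"
      by auto
    with ae b next_state show "\<exists>ae b. ae \<in> Pe E (r k) \<and> (\<forall>i. b i \<in> P i (loc E i r k)) \<and>
                   r (Suc k) = Tr E ae (\<lambda>i. fst (b i)) (r k)"
      by (intro exI[of _ ae] exI[of _ b]) simp
  qed
  then obtain AE B where AE: "\<And>k. AE k \<in> Pe E (r k)"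
    and B: "\<And>k i. B k i \<in> P i (loc E i r k)"
    and next_state: "\<And>k. r (Suc k) = Tr E (AE k) (\<lambda>i. fst (B k i)) (r k)"
    by metis
  define r' where "r' k = (if k \<le> m then f k else (r k, \<lambda>i. snd (B (k - 1) i)))" for k
  have fst_r': "fst \<circ> r' = r"
    using agree by (auto simp: r'_def)
  have "run_step (Emod E \<Phi>) P r' k" for k
  proof (cases "k < m")
    case True
    have "run_step (Emod E \<Phi>) P r' k = run_step (Emod E \<Phi>) P f k"
      by (rule run_step_cong) (use True in \<open>simp add: r'_def\<close>)
    with f_steps True show ?thesis by simp
  next
    case False
    have fst_r'_k: "fst (r' k) = r k"
      using fun_cong[OF fst_r', of k] by simp
    have "r' (Suc k) = (r (Suc k), \<lambda>i. snd (B k i))"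
      using False by (simp add: r'_def)
    with next_state[of k] fst_r'_k
    have "r' (Suc k) = (Tr E (AE k) (\<lambda>i. fst (B k i)) (fst (r' k)), \<lambda>i. snd (B k i))"
      by simp
    with AE[of k] B[of k] fst_r' fst_r'_k show ?thesis
      unfolding run_step_Emod by (intro bexI[of _ "AE k"] exI[of _ "B k"]) simp_all
  qed
  moreover have "r' 0 \<in> Init (Emod E \<Phi>)"
    using f0 by (simp add: r'_def)
  ultimately have "r' \<in> runs (Emod E \<Phi>) P"
    by (simp add: runs_iff_run_step)
  moreover have "\<forall>j\<le>m. r' j = f j"
    by (simp add: r'_def)
  ultimately show ?thesis
    using fst_r' by blast
qed

lemma runs_Emod_lift:
  assumes "r \<in> runs E (fst_proto P)"
  shows "\<exists>r'\<in>runs (Emod E \<Phi>) P. fst \<circ> r' = r"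
proof -
  have "r 0 \<in> Init E"
    using assms by (simp add: runs_iff_run_step)
  then show ?thesis
    using runs_Emod_splice[where f = "\<lambda>k. (r k, \<lambda>i. {})" and m = 0, OF _ _ assms] by auto
qed

lemma runs_Emod_said:
  assumes "r \<in> runs (Emod E \<Phi>) P"
  shows "\<exists>b\<in>P i (loc E i (fst \<circ> r) k). snd (r (Suc k)) i = snd b"
proof -
  obtain b where "\<forall>i. b i \<in> P i (loc E i (fst \<circ> r) k)" "snd (r (Suc k)) = (\<lambda>i. snd (b i))"
    using assms unfolding runs_iff_run_step run_step_Emod by fastforce
  then show ?thesis by auto
qed

text \<open>Any action the protocol offers agent \<open>i\<close> can actually be taken: keep the other agents'
  choices of the original step and extend the resulting prefix to a run.\<close>

lemma runs_Emod_choose_said: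
  assumes "closed_env E" "proper_protocol (Emod E \<Phi>) P"
    and r: "r \<in> runs (Emod E \<Phi>) P" and b: "b \<in> P i (loc E i (fst \<circ> r) k)"
  shows "\<exists>r'\<in>runs (Emod E \<Phi>) P. (\<forall>j\<le>k. r' j = r j) \<and> snd (r' (Suc k)) i = snd b"
proof -
  obtain ae c where ae: "ae \<in> Pe (Emod E \<Phi>) (r k)"
    and c: "\<forall>j. c j \<in> P j (loc (Emod E \<Phi>) j r k)"
    using r unfolding runs_iff_run_step run_step_def by blast
  define f where "f = r(Suc k := Tr (Emod E \<Phi>) ae (c(i := b)) (r k))"
  have "run_step (Emod E \<Phi>) P f j" if "j < Suc k" for j
  proof (cases "j < k")
    case True
    have "run_step (Emod E \<Phi>) P f j = run_step (Emod E \<Phi>) P r j"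
      by (rule run_step_cong) (use True in \<open>simp add: f_def\<close>)
    with r show ?thesis by (simp add: runs_iff_run_step)
  next
    case False
    with that have j: "j = k" by simp
    have "loc E l (fst \<circ> f) k = loc E l (fst \<circ> r) k" for l
      by (rule loc_cong) (simp add: f_def)
    with b c have acts: "\<forall>l. (c(i := b)) l \<in> P l (loc (Emod E \<Phi>) l f k)"
      by simp
    have "f k = r k" "f (Suc k) = Tr (Emod E \<Phi>) ae (c(i := b)) (f k)"
      by (simp_all add: f_def)
    with ae acts show ?thesis
      unfolding j run_step_def by (simp only:) blast
  qed
  moreover have "f 0 \<in> Init (Emod E \<Phi>)"
    using r by (simp add: f_def runs_iff_run_step)
  ultimately obtain r' where r': "r' \<in> runs (Emod E \<Phi>) P" and prefix: "\<forall>j\<le>Suc k. r' j = f j"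
    using runs_extend_prefix[OF closed_env_Emod[OF assms(1)] assms(2)] by blast
  have "\<forall>j\<le>k. r' j = r j"
    using prefix by (simp add: f_def)
  moreover have "snd (r' (Suc k)) i = snd b"
    using prefix[rule_format, of "Suc k"] by (simp add: f_def)
  ultimately show ?thesis
    using r' by blast
qed

section \<open>Lifted formulas\<close>

lemma lift_simps [simp]:
  "lift (FAtom p) = FAtom (Orig p)"
  "lift (FNeg a) = FNeg (lift a)"
  "lift (FAnd a b) = FAnd (lift a) (lift b)"
  "lift (FNext a) = FNext (lift a)"
  "lift (FUntil a b) = FUntil (lift a) (lift b)"
  "lift (FExists a) = FExists (lift a)"
  "lift (FK i a) = FK i (lift a)"
  by (simp_all add: lift_def)

lemma sat_FBox: "sat F R r m (FBox a) \<longleftrightarrow> (\<forall>k\<ge>m. sat F R r k a)"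
  by (auto simp: FBox_def FDiamond_def FTrue_of_def)

lemma sat_FIff: "sat F R r m (FIff a b) \<longleftrightarrow> (sat F R r m a \<longleftrightarrow> sat F R r m b)"
  by (auto simp: FIff_def)

text \<open>Lifted formulas never mention \<open>said\<close>, so they are evaluated on the projection
  \<open>fst \<circ> r'\<close>; the three hypotheses let the quantifiers over runs of \<open>E'\<close> (in
  \<open>\<exists>\<close> and \<open>K\<^sub>i\<close>) and over runs of \<open>E\<close> be traded for each other.\<close>

lemma sat_lift_fst:
  fixes R' :: "(nat \<Rightarrow> 's \<times> ('ag \<Rightarrow> ('p, 'ag) kfml set)) set"
  assumes proj: "\<And>r'. r' \<in> R' \<Longrightarrow> fst \<circ> r' \<in> R"
    and onto: "\<And>r. r \<in> R \<Longrightarrow> \<exists>r'\<in>R'. fst \<circ> r' = r"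
    and splice: "\<And>r' r m. r' \<in> R' \<Longrightarrow> r \<in> R \<Longrightarrow> \<forall>j\<le>m. r j = fst (r' j) \<Longrightarrow>
                   \<exists>r''\<in>R'. (\<forall>j\<le>m. r'' j = r' j) \<and> fst \<circ> r'' = r"
    and "r' \<in> R'"
  shows "sat (Emod E \<Phi>) R' r' m (lift \<psi>) = sat E R (fst \<circ> r') m \<psi>"
  using \<open>r' \<in> R'\<close>
proof (induction \<psi> arbitrary: r' m)
  case (FExists a)
  show ?case
  proof
    assume "sat (Emod E \<Phi>) R' r' m (lift (FExists a))"
    then obtain r'' where r'': "r'' \<in> R'" "\<forall>j\<le>m. r'' j = r' j" "sat (Emod E \<Phi>) R' r'' m (lift a)"
      by auto
    with FExists.IH have "sat E R (fst \<circ> r'') m a"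
      by blast
    with proj[OF r''(1)] r''(2) show "sat E R (fst \<circ> r') m (FExists a)"
      by (simp only: sat.simps) (intro bexI[of _ "fst \<circ> r''"]; simp)
  next
    assume "sat E R (fst \<circ> r') m (FExists a)"
    then obtain r where r: "r \<in> R" "\<forall>j\<le>m. r j = fst (r' j)" "sat E R r m a"
      by auto
    then obtain r'' where r'': "r'' \<in> R'" "\<forall>j\<le>m. r'' j = r' j" "fst \<circ> r'' = r"
      using splice[OF FExists.prems] by blast
    with FExists.IH r(3) have "sat (Emod E \<Phi>) R' r'' m (lift a)"
      by (simp add: comp_def)
    with r''(1,2) show "sat (Emod E \<Phi>) R' r' m (lift (FExists a))"
      by (simp only: lift_simps sat.simps) blast
  qed
next
  case (FK i a)
  show ?case
  proof
    assume K': "sat (Emod E \<Phi>) R' r' m (lift (FK i a))"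
    show "sat E R (fst \<circ> r') m (FK i a)"
      unfolding sat.simps
    proof (intro ballI allI impI)
      fix r m' assume "r \<in> R" and same_loc: "loc E i r m' = loc E i (fst \<circ> r') m"
      then obtain r'' where "r'' \<in> R'" "fst \<circ> r'' = r"
        using onto by blast
      with K' same_loc FK.IH show "sat E R r m' a"
        by (auto simp: comp_def)
    qed
  next
    assume K: "sat E R (fst \<circ> r') m (FK i a)"
    show "sat (Emod E \<Phi>) R' r' m (lift (FK i a))"
      unfolding lift_simps sat.simps
    proof (intro ballI allI impI)
      fix r'' m' assume r'': "r'' \<in> R'" and "loc (Emod E \<Phi>) i r'' m' = loc (Emod E \<Phi>) i r' m"
      with K proj have "sat E R (fst \<circ> r'') m' a"
        by simp
      with FK.IH[OF r''] show "sat (Emod E \<Phi>) R' r'' m' (lift a)"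
        by (simp add: comp_def)
    qed
  qed
qed simp_all

lemma sat_lift_runs_Emod:
  assumes "r' \<in> runs (Emod E \<Phi>) P"
  shows "sat (Emod E \<Phi>) (runs (Emod E \<Phi>) P) r' m (lift \<psi>) =
         sat E (runs E (fst_proto P)) (fst \<circ> r') m \<psi>"
proof (rule sat_lift_fst)
  show "\<exists>r''\<in>runs (Emod E \<Phi>) P. (\<forall>j\<le>m. r'' j = r' j) \<and> fst \<circ> r'' = r"
    if "r' \<in> runs (Emod E \<Phi>) P" "r \<in> runs E (fst_proto P)" "\<forall>j\<le>m. r j = fst (r' j)" for r' r m
    using that by (intro runs_Emod_splice) (simp_all add: runs_iff_run_step)
qed (simp_all add: assms runs_Emod_fst runs_Emod_lift)

lemma realizes_Say_conjuncts_iff: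
  "(\<forall>\<psi>\<in>Say_conjuncts \<Phi>. realizes (Emod E \<Phi>) P \<psi>) \<longleftrightarrow>
   (\<forall>i \<chi>. FK i \<chi> \<in> \<Phi> \<longrightarrow> (\<forall>r\<in>runs (Emod E \<Phi>) P. \<forall>k.
      sat (Emod E \<Phi>) (runs (Emod E \<Phi>) P) r k (lift (FK i \<chi>)) \<longleftrightarrow> FK i \<chi> \<in> snd (r (Suc k)) i))"
proof -
  have "realizes (Emod E \<Phi>) P (FBox (FIff (lift (FK i \<chi>)) (FNext (FAtom (Said i (FK i \<chi>)))))) \<longleftrightarrow>
        (\<forall>r\<in>runs (Emod E \<Phi>) P. \<forall>k.
           sat (Emod E \<Phi>) (runs (Emod E \<Phi>) P) r k (lift (FK i \<chi>)) \<longleftrightarrow> FK i \<chi> \<in> snd (r (Suc k)) i)"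
    for i \<chi>
    unfolding realizes_def sat_FBox sat_FIff by (simp del: lift_simps)
  then show ?thesis
    unfolding Say_conjuncts_def by blast
qed

section \<open>Adding and forgetting announcements\<close>

definition known_at_state ::
    "('s, 'ae, 'a, 'ag, 'o, 'p) env \<Rightarrow> ('p, 'ag) kfml set \<Rightarrow> ('q, 'o, 'a, 'ag) pautos \<Rightarrow> 'ag \<Rightarrow> 'q
     \<Rightarrow> ('p, 'ag) kfml set" where
  "known_at_state E \<Phi> A i q = {FK i \<chi> | \<chi>. FK i \<chi> \<in> \<Phi> \<and>
     (\<forall>r\<in>runs E (pa_proto A). \<forall>m. astate A i (loc E i r m) = q \<longrightarrow> sat E (runs E (pa_proto A)) r m \<chi>)}"

definition said_pautos ::
    "('s, 'ae, 'a, 'ag, 'o, 'p) env \<Rightarrow> ('p, 'ag) kfml set \<Rightarrow> ('q, 'o, 'a, 'ag) pautos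
     \<Rightarrow> ('q, 'o, 'a \<times> ('p, 'ag) kfml set, 'ag) pautos" where
  "said_pautos E \<Phi> A = \<lparr>Qs = Qs A, q0 = q0 A, mu = mu A,
     alpha = (\<lambda>i q. alpha A i q \<times> {known_at_state E \<Phi> A i q})\<rparr>"

lemma astate_said_pautos: "astate (said_pautos E \<Phi> A) = astate A"
  by (simp add: fun_eq_iff astate_def said_pautos_def)

lemma pa_proto_said_pautos:
  "pa_proto (said_pautos E \<Phi> A) i \<sigma> = pa_proto A i \<sigma> \<times> {known_at_state E \<Phi> A i (astate A i \<sigma>)}"
  by (simp add: pa_proto_def astate_said_pautos) (simp add: said_pautos_def)

lemma fst_proto_said_pautos: "fst_proto (pa_proto (said_pautos E \<Phi> A)) = pa_proto A"
  by (simp add: fun_eq_iff fst_proto_def pa_proto_said_pautos)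

lemma is_pautos_said_pautos:
  assumes "is_pautos E A"
  shows "is_pautos (Emod E \<Phi>) (said_pautos E \<Phi> A)"
proof -
  have "known_at_state E \<Phi> A i q \<subseteq> Phi_i \<Phi> i" for i q
    by (auto simp: known_at_state_def Phi_i_def)
  with assms show ?thesis
    unfolding is_pautos_def said_pautos_def by (simp add: subset_iff)
qed

lemma finite_pautos_said_pautos: "finite_pautos A \<Longrightarrow> finite_pautos (said_pautos E \<Phi> A)"
  by (simp add: finite_pautos_def said_pautos_def)

lemma realizes_phi_Say_said_pautos:
  assumes A: "\<forall>r\<in>runs E (pa_proto A). sat E (runs E (pa_proto A)) r 0 \<phi> \<and> know_holds E \<Phi> A r"
  shows "realizes_phi_Say E \<Phi> \<phi> (pa_proto (said_pautos E \<Phi> A))"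
proof -
  let ?P' = "pa_proto (said_pautos E \<Phi> A)"
  let ?R = "runs E (pa_proto A)" and ?R' = "runs (Emod E \<Phi>) ?P'"
  have proj: "fst \<circ> r' \<in> ?R" if "r' \<in> ?R'" for r'
    using runs_Emod_fst[OF that] by (simp add: fst_proto_said_pautos)
  have lift: "sat (Emod E \<Phi>) ?R' r' m (lift \<psi>) = sat E ?R (fst \<circ> r') m \<psi>" if "r' \<in> ?R'" for r' m \<psi>
    using sat_lift_runs_Emod[OF that] by (simp add: fst_proto_said_pautos)
  have "sat (Emod E \<Phi>) ?R' r' k (lift (FK i \<chi>)) \<longleftrightarrow> FK i \<chi> \<in> snd (r' (Suc k)) i"
    if K: "FK i \<chi> \<in> \<Phi>" and r': "r' \<in> ?R'" for i \<chi> r' k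
  proof -
    let ?q = "astate A i (loc E i (fst \<circ> r') k)"
    have said: "snd (r' (Suc k)) i = known_at_state E \<Phi> A i ?q"
      using runs_Emod_said[OF r', of i k] by (auto simp: pa_proto_said_pautos)
    have "sat (Emod E \<Phi>) ?R' r' k (lift (FK i \<chi>)) \<longleftrightarrow> sat E ?R (fst \<circ> r') k (FK i \<chi>)"
      using lift[OF r'] .
    also have "\<dots> \<longleftrightarrow> satKA E A i (fst \<circ> r') k \<chi>"
      using A proj[OF r'] K by (simp add: know_holds_def)
    also have "\<dots> \<longleftrightarrow> FK i \<chi> \<in> snd (r' (Suc k)) i"
      using K by (simp add: said known_at_state_def satKA_def)
    finally show ?thesis .
  qed
  moreover have "realizes (Emod E \<Phi>) ?P' (lift \<phi>)"
    using A proj lift by (simp add: realizes_def)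
  ultimately show ?thesis
    by (simp add: realizes_phi_Say_def realizes_Say_conjuncts_iff)
qed

definition fst_pautos :: "('q, 'o, 'a \<times> 'b, 'ag) pautos \<Rightarrow> ('q, 'o, 'a, 'ag) pautos" where
  "fst_pautos A' = \<lparr>Qs = Qs A', q0 = q0 A', mu = mu A', alpha = (\<lambda>i q. fst ` alpha A' i q)\<rparr>"

lemma astate_fst_pautos: "astate (fst_pautos A') = astate A'"
  by (simp add: fun_eq_iff astate_def fst_pautos_def)

lemma pa_proto_fst_pautos: "pa_proto (fst_pautos A') = fst_proto (pa_proto A')"
  by (simp add: fun_eq_iff pa_proto_def fst_proto_def astate_fst_pautos) (simp add: fst_pautos_def)

lemma finite_pautos_fst_pautos: "finite_pautos A' \<Longrightarrow> finite_pautos (fst_pautos A')"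
  by (simp add: finite_pautos_def fst_pautos_def)

lemma is_pautos_fst_pautos:
  assumes "is_pautos (Emod E \<Phi>) A'"
  shows "is_pautos E (fst_pautos A')"
  using assms unfolding is_pautos_def fst_pautos_def by (auto simp: subset_iff)

lemma satKA_imp_sat_K: "satKA E A i r m \<chi> \<Longrightarrow> sat E (runs E (pa_proto A)) r m (FK i \<chi>)"
  by (simp add: satKA_def)

lemma sat_K_imp_satKA_fst_pautos:
  assumes E: "closed_env E" and A': "is_pautos (Emod E \<Phi>) A'"
    and say: "\<forall>\<psi>\<in>Say_conjuncts \<Phi>. realizes (Emod E \<Phi>) (pa_proto A') \<psi>"
    and K: "FK i \<chi> \<in> \<Phi>"
    and r: "r \<in> runs E (pa_proto (fst_pautos A'))"
    and K_r: "sat E (runs E (pa_proto (fst_pautos A'))) r m (FK i \<chi>)"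
  shows "satKA E (fst_pautos A') i r m \<chi>"
  unfolding satKA_def
proof (intro ballI allI impI)
  let ?P' = "pa_proto A'"
  let ?R = "runs E (fst_proto ?P')" and ?R' = "runs (Emod E \<Phi>) ?P'"
  have said: "sat (Emod E \<Phi>) ?R' r' k (lift (FK i \<chi>)) \<longleftrightarrow> FK i \<chi> \<in> snd (r' (Suc k)) i"
    if "r' \<in> ?R'" for r' k
    using say K that by (simp add: realizes_Say_conjuncts_iff del: lift_simps)
  fix r2 m2
  assume r2: "r2 \<in> runs E (pa_proto (fst_pautos A'))"
    and same_state: "astate (fst_pautos A') i (loc E i r2 m2) = astate (fst_pautos A') i (loc E i r m)"
  obtain r' where r': "r' \<in> ?R'" "fst \<circ> r' = r"
    using runs_Emod_lift r unfolding pa_proto_fst_pautos by blast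
  with K_r said have "FK i \<chi> \<in> snd (r' (Suc m)) i"
    unfolding pa_proto_fst_pautos using sat_lift_runs_Emod by blast
  moreover obtain b where b: "b \<in> ?P' i (loc E i r m)" "snd (r' (Suc m)) i = snd b"
    using runs_Emod_said[OF r'(1)] r'(2) by blast
  ultimately have said_b: "FK i \<chi> \<in> snd b"
    by simp
  obtain r2' where r2': "r2' \<in> ?R'" "fst \<circ> r2' = r2"
    using runs_Emod_lift r2 unfolding pa_proto_fst_pautos by blast
  from b(1) same_state have "b \<in> ?P' i (loc E i (fst \<circ> r2') m2)"
    by (simp add: pa_proto_def astate_fst_pautos r2'(2))
  then obtain r3 where r3: "r3 \<in> ?R'" "\<forall>j\<le>m2. r3 j = r2' j" "snd (r3 (Suc m2)) i = snd b"
    using runs_Emod_choose_said[OF E proper_protocol_pa_proto[OF A'] r2'(1)] by blast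
  have "sat E ?R (fst \<circ> r3) m2 (FK i \<chi>)"
    using said[OF r3(1)] said_b r3(3) sat_lift_runs_Emod[OF r3(1)] by (simp del: lift_simps)
  moreover have "loc E i (fst \<circ> r3) m2 = loc E i r2 m2"
    by (rule loc_cong) (use r3(2) r2'(2) in auto)
  ultimately show "sat E (runs E (pa_proto (fst_pautos A'))) r2 m2 \<chi>"
    using r2 unfolding pa_proto_fst_pautos by simp
qed

lemma fst_pautos_realizes:
  assumes E: "closed_env E" and A': "is_pautos (Emod E \<Phi>) A'"
    and realizes: "realizes_phi_Say E \<Phi> \<phi> (pa_proto A')"
    and r: "r \<in> runs E (pa_proto (fst_pautos A'))"
  shows "sat E (runs E (pa_proto (fst_pautos A'))) r 0 \<phi> \<and> know_holds E \<Phi> (fst_pautos A') r"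
proof
  have say: "\<forall>\<psi>\<in>Say_conjuncts \<Phi>. realizes (Emod E \<Phi>) (pa_proto A') \<psi>"
    and realizes_\<phi>: "realizes (Emod E \<Phi>) (pa_proto A') (lift \<phi>)"
    using realizes by (simp_all add: realizes_phi_Say_def)
  obtain r' where r': "r' \<in> runs (Emod E \<Phi>) (pa_proto A')" "fst \<circ> r' = r"
    using runs_Emod_lift r unfolding pa_proto_fst_pautos by blast
  with realizes_\<phi> have "sat (Emod E \<Phi>) (runs (Emod E \<Phi>) (pa_proto A')) r' 0 (lift \<phi>)"
    by (simp add: realizes_def)
  with r' show "sat E (runs E (pa_proto (fst_pautos A'))) r 0 \<phi>"
    by (simp add: sat_lift_runs_Emod pa_proto_fst_pautos del: lift_simps)
  show "know_holds E \<Phi> (fst_pautos A') r"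
    unfolding know_holds_def
  proof (intro allI impI iffI)
    fix i \<chi> m
    assume K: "FK i \<chi> \<in> \<Phi>"
    show "satKA E (fst_pautos A') i r m \<chi>" if "sat E (runs E (pa_proto (fst_pautos A'))) r m (FK i \<chi>)"
      using sat_K_imp_satKA_fst_pautos[OF E A' say K r that] .
    show "sat E (runs E (pa_proto (fst_pautos A'))) r m (FK i \<chi>)" if "satKA E (fst_pautos A') i r m \<chi>"
      using that by (rule satKA_imp_sat_K)
  qed
qed

theorem proposition4:
  fixes E :: "('s, 'ae, 'a, 'ag :: finite, 'o, 'p) env"
    and \<Phi> :: "('p, 'ag) kfml set"
    and \<phi> :: "('p, 'ag) kfml"
  assumes "finite_env E"
    and "finite \<Phi>"
    and "knowledge_set \<Phi>"
  shows "((\<exists>A :: ('q, 'o, 'a, 'ag) pautos. is_pautos E A \<and>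
             (\<forall>r\<in>runs E (pa_proto A). sat E (runs E (pa_proto A)) r 0 \<phi> \<and> know_holds E \<Phi> A r))
          \<longleftrightarrow>
          (\<exists>A' :: ('q, 'o, 'a \<times> ('p, 'ag) kfml set, 'ag) pautos. is_pautos (Emod E \<Phi>) A' \<and>
             realizes_phi_Say E \<Phi> \<phi> (pa_proto A')))
       \<and>
         ((\<exists>A :: ('q, 'o, 'a, 'ag) pautos. is_pautos E A \<and> finite_pautos A \<and>
             (\<forall>r\<in>runs E (pa_proto A). sat E (runs E (pa_proto A)) r 0 \<phi> \<and> know_holds E \<Phi> A r))
          \<longleftrightarrow>
          (\<exists>A' :: ('q, 'o, 'a \<times> ('p, 'ag) kfml set, 'ag) pautos. is_pautos (Emod E \<Phi>) A' \<and> finite_pautos A' \<and>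
             realizes_phi_Say E \<Phi> \<phi> (pa_proto A')))"
proof -
  have E: "closed_env E"
    using assms(1) by (rule finite_env_closed)
  show ?thesis
    by (intro conjI iffI; elim exE conjE;
        metis is_pautos_said_pautos realizes_phi_Say_said_pautos finite_pautos_said_pautos
          is_pautos_fst_pautos fst_pautos_realizes[OF E] finite_pautos_fst_pautos)
qed

end
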